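(* In the setting below, let $\mu=\alpha_1+\alpha_2+2\alpha_3+2\alpha_4+\alpha_5+\alpha_6$ and $\tau\mu=\alpha_1+\alpha_2+\alpha_3+2\alpha_4+2\alpha_5+\alpha_6$. Then $v=1\otimes e^{\mu}-1\otimes e^{\tau\mu}\in V^{\Lambda_0}$ is a highest weight vector of type $Vir(\tfrac45,\tfrac25)\otimes W^{\Omega_4}$, i.e. it satisfies (HW1)–(HW5) with $h=2/5$ and $\omega_j=\omega_4$.
   Context: Setting. $Q$ is the $E_6$ root lattice with simple roots $\alpha_1,\dots,\alpha_6$ (Dynkin chain $\alpha_1-\alpha_3-\alpha_4-\alpha_5-\alpha_6$, $\alpha_2$ attached to $\alpha_4$), form $\langle\cdot,\cdot\rangle$ from the Cartan matrix, fundamental weights $\lambda_i$, $P=\bigoplus\mathbb Z\lambda_i$, $\mathfrak h=\mathbb C\otimes P$. $\varepsilon:P\times P\to\{\pm1\}$ is bimultiplicative with $[\varepsilon(\lambda_i,\lambda_j)]$ rows $(1,1,1,1,1,1)$, $(-1,1,1,1,1,-1)$, $(-1,1,1,1,1,1)$, $(1,-1,1,1,1,1)$, $(1,1,1,1,1,-1)$, $(1,1,1,1,1,1)$. $V_P=S(\hat{\mathfrak h}^-)\otimes\mathbb C[P]$ with Heisenberg operators $h(n)$ ($[h(m),h'(n)]=m\langle h,h'\rangle\delta_{m+n,0}$, $h(n)1=0$ for $n>0$, $h(0)(u\otimes e^\beta)=\langle h,\beta\rangle u\otimes e^\beta$). For $\alpha\in Q$: $Y(1\otimes e^\alpha,z)=\exp(\sum_{k\ge1}\frac{\alpha(-k)}kz^k)\exp(-\sum_{k\ge1}\frac{\alpha(k)}kz^{-k})e_\alpha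 z^{\alpha(0)}=\sum_n\{1\otimes e^\alpha\}_nz^{-n-1}$, $e_\alpha(u\otimes e^\beta)=\varepsilon(\alpha,\beta)u\otimes e^{\alpha+\beta}$, $z^{\alpha(0)}(u\otimes e^\beta)=z^{\langle\alpha,\beta\rangle}u\otimes e^\beta$; $Y(h_1(-1)\cdots h_k(-1)\otimes e^\alpha,z)=\,:h_1(z)\cdots h_k(z)Y(1\otimes e^\alpha,z):$ with $h(z)=\sum_nh(n)z^{-n-1}$ (annihilators to the right). $V^{\Lambda_0}=S(\hat{\mathfrak h}^-)\otimes\mathbb C[Q]$. $\tau$: $\alpha_1\leftrightarrow\alpha_6$, $\alpha_3\leftrightarrow\alpha_5$; $\mathrm{Proj}(\nu)=(\nu+\tau\nu)/2$. $\theta=\alpha_1+2\alpha_2+2\alpha_3+3\alpha_4+2\alpha_5+\alpha_6$. Raising operators of $\tilde{\mathfrak a}$ (type $F_4^{(1)}$): $\{\beta_1\}_0=\{1\otimes e^{\alpha_2}\}_0$, $\{\beta_2\}_0=\{1\otimes e^{\alpha_4}\}_0$, $\{\beta_3\}_0=\{1\otimes e^{\alpha_3}\}_0+\{1\otimes e^{\alpha_5}\}_0$, $\{\beta_4\}_0=\{1\otimes e^{\alpha_1}\}_0+\{1\otimes e^{\alpha_6}\}_0$, and $\{1\otimes e^{-\theta}\}_1$. Coset conformal vector: $\omega=\frac1{10}[(-\lambda_1+\lambda_6)(-1)^2+(\lambda_3-\lambda_5)(-1)^2+(\lambda_1-\lambda_3+\lambda_5-\lambda_6)(-1)^2]\otimes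 e^0+\frac15(-1\otimes e^{\pm\gamma_1}-1\otimes e^{\pm\gamma_2}+1\otimes e^{\pm\gamma_3})$, $\gamma_1=\alpha_1-\alpha_6$, $\gamma_2=\alpha_3-\alpha_5$, $\gamma_3=\gamma_1+\gamma_2$, $1\otimes e^{\pm\gamma}:=1\otimes e^{\gamma}+1\otimes e^{-\gamma}$; $L(n)=\{\omega\}_{n+1}$ (Virasoro, central charge $4/5$, commuting with $\tilde{\mathfrak a}$). $\omega_4=\frac{\lambda_1+\lambda_6}2$; $\Omega_4$ is the level one $F_4^{(1)}$ weight with finite part $\omega_4$, $W^{\Omega_4}$ its irreducible module, $Vir(c,h)$ irreducible highest weight Virasoro modules. A nonzero $v\in V_P$ is a highest weight vector of type $Vir(\frac45,h)\otimes W^{\Omega_j}$ if (HW1) $\{1\otimes e^{-\theta}\}_1v=0$; (HW2) $\{\beta_i\}_0v=0$, $i=1,\dots,4$; (HW3) $L(1)v=L(2)v=0$; (HW4) $L(0)v=hv$; (HW5) $v\in\bigoplus_kS(\hat{\mathfrak h}^-)\otimes e^{\nu_k}$ with $\mathrm{Proj}(\nu_k)=\omega_j$. *)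

theory Defs
  imports Complex_Main "HOL-Library.Poly_Mapping"
begin

section \<open>The E6 root datum\<close>

text \<open>Index set for simple roots / fundamental weights (Bourbaki labelling:
chain a1 - a3 - a4 - a5 - a6, a2 attached to a4).\<close>

datatype idx = I1 | I2 | I3 | I4 | I5 | I6

lemma UNIV_idx: "(UNIV :: idx set) = {I1, I2, I3, I4, I5, I6}"
  using idx.exhaust by auto

instance idx :: finite
  by standard (simp add: UNIV_idx)

fun ix :: "idx \<Rightarrow> nat" where
  "ix I1 = 1" | "ix I2 = 2" | "ix I3 = 3" | "ix I4 = 4" | "ix I5 = 5" | "ix I6 = 6"

definition cartan :: "idx \<Rightarrow> idx \<Rightarrow> int" where
  "cartan i j = (if i = j then 2
     else if (i, j) \<in> {(I1,I3),(I3,I1),(I3,I4),(I4,I3),(I4,I5),(I5,I4),(I5,I6),(I6,I5),(I2,I4),(I4,I2)}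
     then -1 else 0)"

text \<open>Inverse Cartan matrix, i.e. the Gram matrix of the fundamental weights:
  ginv i j = <lambda_i, lambda_j>.  (Checked below: cartan * ginv = identity.)\<close>
definition ginv :: "idx \<Rightarrow> idx \<Rightarrow> rat" where
  "ginv i j = of_int ([[4,3,5,6,4,2],[3,6,6,9,6,3],[5,6,10,12,8,4],
                       [6,9,12,18,12,6],[4,6,8,12,10,5],[2,3,4,6,5,4]]
                       ! (ix i - 1) ! (ix j - 1)) / 3"

lemma cartan_ginv: "(\<Sum>k\<in>UNIV. of_int (cartan i k) * ginv k j) = (if i = j then 1 else 0)"
  by (cases i; cases j) (simp_all add: UNIV_idx cartan_def ginv_def)

text \<open>Elements of P are written in the basis of fundamental weights
  (nu = sum_i nu i * lambda_i); elements of h = C (x) P likewise with complex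
  coefficients.\<close>
type_synonym wt = "idx \<Rightarrow> int"
type_synonym hv = "idx \<Rightarrow> complex"

definition of_wt :: "wt \<Rightarrow> hv" where
  "of_wt b = (\<lambda>i. of_int (b i))"

definition lam :: "idx \<Rightarrow> wt" where
  "lam i = (\<lambda>j. if j = i then 1 else 0)"

definition ip :: "hv \<Rightarrow> hv \<Rightarrow> complex" where
  "ip x y = (\<Sum>i\<in>UNIV. \<Sum>j\<in>UNIV. x i * of_rat (ginv i j) * y j)"

text \<open>Elements of Q are given by their coordinates c in the basis of simple
  roots (alpha = sum_i c i * alpha_i); qwt converts to fundamental weight
  coordinates (alpha_i = sum_j cartan i j * lambda_j).\<close>
definition qwt :: "(idx \<Rightarrow> int) \<Rightarrow> wt" where
  "qwt c = (\<lambda>j. \<Sum>i\<in>UNIV. c i * cartan i j)"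

definition sroot :: "idx \<Rightarrow> idx \<Rightarrow> int" where
  "sroot i = (\<lambda>j. if j = i then 1 else 0)"

definition epsmat :: "idx \<Rightarrow> idx \<Rightarrow> complex" where
  "epsmat i j = (if (i, j) \<in> {(I2,I1), (I2,I6), (I3,I1), (I4,I2), (I5,I6)} then -1 else 1)"

definition eps :: "wt \<Rightarrow> wt \<Rightarrow> complex" where
  "eps a b = (\<Prod>i\<in>UNIV. \<Prod>j\<in>UNIV. epsmat i j powi (a i * b j))"

section \<open>The space V_P = S(h^-) (x) C[P]\<close>

text \<open>A monomial in S(h^-): multiplicities of the generators lambda_i(-k), keyed
  by (i, k) with k >= 1.  A vector of V_P is a finitely supported complex
  function on pairs (monomial, beta), the pair (m, beta) standing for m (x) e^beta.\<close>
type_synonym mono = "(idx \<times> nat) \<Rightarrow>\<^sub>0 nat"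
type_synonym vec = "(mono \<times> wt) \<Rightarrow>\<^sub>0 complex"

definition deg :: "mono \<Rightarrow> nat" where
  "deg m = (\<Sum>p\<in>Poly_Mapping.keys m. snd p * Poly_Mapping.lookup m p)"

definition bv :: "mono \<Rightarrow> wt \<Rightarrow> vec" where
  "bv m b = Poly_Mapping.single (m, b) 1"

definition smul :: "complex \<Rightarrow> vec \<Rightarrow> vec" where
  "smul c v = Poly_Mapping.map ((*) c) v"

definition lin :: "(mono \<times> wt \<Rightarrow> vec) \<Rightarrow> vec \<Rightarrow> vec" where
  "lin g v = (\<Sum>x\<in>Poly_Mapping.keys v. smul (Poly_Mapping.lookup v x) (g x))"

text \<open>Heisenberg operators h(n).  h(-k) (k>0) multiplies by
  h = sum_j h_j lambda_j(-k);  h(k) (k>0) is the derivation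
  k * sum_j <h,lambda_j> d/d(lambda_j(-k));  h(0) acts by <h,beta>.\<close>
definition hmode_b :: "hv \<Rightarrow> int \<Rightarrow> mono \<times> wt \<Rightarrow> vec" where
  "hmode_b h n x = (case x of (m, b) \<Rightarrow>
     if n < 0 then (\<Sum>j\<in>UNIV. smul (h j) (bv (m + Poly_Mapping.single (j, nat (- n)) 1) b))
     else if n = 0 then smul (ip h (of_wt b)) (bv m b)
     else (\<Sum>j\<in>UNIV. smul (of_int n * ip h (of_wt (lam j)) * of_nat (Poly_Mapping.lookup m (j, nat n)))
                      (bv (m - Poly_Mapping.single (j, nat n) 1) b)))"

definition hmode :: "hv \<Rightarrow> int \<Rightarrow> vec \<Rightarrow> vec" where
  "hmode h n = lin (hmode_b h n)"

text \<open>Coefficients of exponentials.  pwm a r n is the coefficient of z^n in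
  (sum_{k>=1} a(-k) z^k / k)^r;  expm a n is the coefficient of z^n in
  exp(sum_{k>=1} a(-k) z^k / k).  Similarly pwp/expp give the coefficient of
  z^(-n) in (-sum_{k>=1} a(k) z^(-k) / k)^r  resp.  exp(-sum_{k>=1} a(k) z^(-k)/k).\<close>
fun pwm :: "hv \<Rightarrow> nat \<Rightarrow> nat \<Rightarrow> vec \<Rightarrow> vec" where
  "pwm a 0 n v = (if n = 0 then v else 0)"
| "pwm a (Suc r) n v = (\<Sum>k\<in>{1..n}. smul (1 / of_nat k) (hmode a (- int k) (pwm a r (n - k) v)))"

fun pwp :: "hv \<Rightarrow> nat \<Rightarrow> nat \<Rightarrow> vec \<Rightarrow> vec" where
  "pwp a 0 n v = (if n = 0 then v else 0)"
| "pwp a (Suc r) n v = (\<Sum>k\<in>{1..n}. smul (- 1 / of_nat k) (hmode a (int k) (pwp a r (n - k) v)))"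

definition expm :: "hv \<Rightarrow> nat \<Rightarrow> vec \<Rightarrow> vec" where
  "expm a n v = (\<Sum>r\<in>{0..n}. smul (1 / fact r) (pwm a r n v))"

definition expp :: "hv \<Rightarrow> nat \<Rightarrow> vec \<Rightarrow> vec" where
  "expp a n v = (\<Sum>r\<in>{0..n}. smul (1 / fact r) (pwp a r n v))"

text \<open>eop c n = {1 (x) e^alpha}_n, alpha = sum_i c i * alpha_i in Q, i.e. the
  coefficient of z^(-n-1) in  E^-(alpha,z) E^+(alpha,z) e_alpha z^(alpha(0)).
  On m (x) e^beta, with s = <alpha,beta> = sum_i c i * beta i, this is
  eps(alpha,beta) * sum_{a - b + s = -n-1, a,b >= 0} E^-_a E^+_b (m (x) e^(alpha+beta)).
  The sum over b is written over 0..deg m: E^+_b annihilates m for b > deg m.\<close>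
definition eop_b :: "(idx \<Rightarrow> int) \<Rightarrow> int \<Rightarrow> mono \<times> wt \<Rightarrow> vec" where
  "eop_b c n x = (case x of (m, b) \<Rightarrow>
     (let al = qwt c; s = (\<Sum>i\<in>UNIV. c i * b i) in
      smul (eps al b)
        (\<Sum>bb\<in>{0..deg m}. (let a = int bb - s - n - 1 in
            if a \<ge> 0 then expm (of_wt al) (nat a) (expp (of_wt al) bb (bv m (\<lambda>i. al i + b i)))
            else 0))))"

definition eop :: "(idx \<Rightarrow> int) \<Rightarrow> int \<Rightarrow> vec \<Rightarrow> vec" where
  "eop c n = lin (eop_b c n)"

text \<open>qmode h1 h2 n = {h1(-1) h2(-1) (x) e^0}_n, the coefficient of z^(-n-1) in
  :h1(z) h2(z):, i.e. sum_{p+q=n-1} :h1(p) h2(q):  with annihilators h(k), k >= 0,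
  placed to the right.  On m (x) e^beta the terms with p outside
  [(n-1) - deg m, deg m] vanish, so the sum is written over that range.\<close>
definition qmode_b :: "hv \<Rightarrow> hv \<Rightarrow> int \<Rightarrow> mono \<times> wt \<Rightarrow> vec" where
  "qmode_b h1 h2 n x = (let N = n - 1; d = int (deg (fst x)); u = Poly_Mapping.single x 1 in
     (\<Sum>p\<in>{N - d..d}. if p < 0 then hmode h1 p (hmode h2 (N - p) u)
                         else hmode h2 (N - p) (hmode h1 p u)))"

definition qmode :: "hv \<Rightarrow> hv \<Rightarrow> int \<Rightarrow> vec \<Rightarrow> vec" where
  "qmode h1 h2 n = lin (qmode_b h1 h2 n)"

section \<open>The coset Virasoro operators L(n) = {omega}_(n+1)\<close>

definition g1 :: hv where "g1 = (\<lambda>i. if i = I1 then -1 else if i = I6 then 1 else 0)"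
definition g2 :: hv where "g2 = (\<lambda>i. if i = I3 then 1 else if i = I5 then -1 else 0)"
definition g3 :: hv where
  "g3 = (\<lambda>i. if i = I1 then 1 else if i = I3 then -1 else if i = I5 then 1 else if i = I6 then -1 else 0)"

definition gam1 :: "idx \<Rightarrow> int" where "gam1 = (\<lambda>i. if i = I1 then 1 else if i = I6 then -1 else 0)"
definition gam2 :: "idx \<Rightarrow> int" where "gam2 = (\<lambda>i. if i = I3 then 1 else if i = I5 then -1 else 0)"
definition gam3 :: "idx \<Rightarrow> int" where "gam3 = (\<lambda>i. gam1 i + gam2 i)"

definition epm :: "(idx \<Rightarrow> int) \<Rightarrow> int \<Rightarrow> vec \<Rightarrow> vec" where
  "epm c n v = eop c n v + eop (\<lambda>i. - c i) n v"

definition Lop :: "int \<Rightarrow> vec \<Rightarrow> vec" where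
  "Lop n v = smul (1/10) (qmode g1 g1 (n + 1) v + qmode g2 g2 (n + 1) v + qmode g3 g3 (n + 1) v)
           + smul (1/5) (- epm gam1 (n + 1) v - epm gam2 (n + 1) v + epm gam3 (n + 1) v)"

definition theta :: "idx \<Rightarrow> int" where
  "theta i = (case i of I1 \<Rightarrow> 1 | I2 \<Rightarrow> 2 | I3 \<Rightarrow> 2 | I4 \<Rightarrow> 3 | I5 \<Rightarrow> 2 | I6 \<Rightarrow> 1)"

text \<open>The diagram automorphism tau (alpha_1 <-> alpha_6, alpha_3 <-> alpha_5), which
  permutes the fundamental weights in the same way.\<close>
fun tau :: "idx \<Rightarrow> idx" where
  "tau I1 = I6" | "tau I6 = I1" | "tau I3 = I5" | "tau I5 = I3" | "tau I2 = I2" | "tau I4 = I4"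

definition proj :: "hv \<Rightarrow> hv" where
  "proj nu = (\<lambda>i. (nu i + nu (tau i)) / 2)"

definition omega4 :: hv where
  "omega4 = (\<lambda>i. if i = I1 \<or> i = I6 then 1/2 else 0)"

text \<open>v lies in V^{Lambda_0} = S(h^-) (x) C[Q].\<close>
definition in_VQ :: "vec \<Rightarrow> bool" where
  "in_VQ v \<longleftrightarrow> (\<forall>x\<in>Poly_Mapping.keys v. snd x \<in> range qwt)"

text \<open>v is a highest weight vector of type Vir(4/5,h) (x) W^{Omega_j}, where wj is
  the finite part omega_j: conditions (HW1)-(HW5).\<close>
definition hw_vec :: "complex \<Rightarrow> hv \<Rightarrow> vec \<Rightarrow> bool" where
  "hw_vec h wj v \<longleftrightarrow>
     v \<noteq> 0
   \<and> eop (\<lambda>i. - theta i) 1 v = 0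
   \<and> eop (sroot I2) 0 v = 0
   \<and> eop (sroot I4) 0 v = 0
   \<and> eop (sroot I3) 0 v + eop (sroot I5) 0 v = 0
   \<and> eop (sroot I1) 0 v + eop (sroot I6) 0 v = 0
   \<and> Lop 1 v = 0 \<and> Lop 2 v = 0
   \<and> Lop 0 v = smul h v
   \<and> (\<forall>x\<in>Poly_Mapping.keys v. proj (of_wt (snd x)) = wj)"

definition mu :: "idx \<Rightarrow> int" where
  "mu i = (case i of I1 \<Rightarrow> 1 | I2 \<Rightarrow> 1 | I3 \<Rightarrow> 2 | I4 \<Rightarrow> 2 | I5 \<Rightarrow> 1 | I6 \<Rightarrow> 1)"
definition taumu :: "idx \<Rightarrow> int" where
  "taumu i = (case i of I1 \<Rightarrow> 1 | I2 \<Rightarrow> 1 | I3 \<Rightarrow> 1 | I4 \<Rightarrow> 2 | I5 \<Rightarrow> 2 | I6 \<Rightarrow> 1)"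

end

theory Submission
  imports Defs
begin

text \<open>Both summands of v are vacuum vectors 1 \<otimes> e^\<beta> with \<beta> a root of E6. On such a
  vector the mode {1 \<otimes> e^\<alpha>}_n vanishes unless \<langle>\<alpha>,\<beta>\<rangle> \<le> -n-1, and at equality it
  gives \<epsilon>(\<alpha>,\<beta>) 1 \<otimes> e^(\<alpha>+\<beta>); the quadratic modes act on it by \<langle>h1,\<beta>\<rangle>\<langle>h2,\<beta>\<rangle> in degree
  zero and by 0 in positive degree. Hence every condition reduces to pairings of
  \<mu>, \<tau>\<mu> with a few roots. The only raising operator that does not kill both summands
  is {\<beta>_3}_0: it sends e^\<tau>\<mu> and e^\<mu> to the same e^(\<alpha>_3+\<tau>\<mu>) = e^(\<alpha>_5+\<mu>) with
  equal signs, so the difference cancels. Similarly e^(\<plusminus>\<gamma>_2) exchanges e^\<mu> and e^\<tau>\<mu>,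
  contributing 1/5 to L(0), and the Heisenberg part contributes the other 1/5.\<close>

lemma lookup_smul [simp]: "Poly_Mapping.lookup (smul c v) k = c * Poly_Mapping.lookup v k"
  by (simp add: smul_def Poly_Mapping.map.rep_eq when_def)

lemma smul_zero_left [simp]: "smul 0 v = 0"
  by (rule poly_mapping_eqI) simp

lemma smul_zero_right [simp]: "smul c 0 = 0"
  by (rule poly_mapping_eqI) simp

lemma smul_one [simp]: "smul 1 v = v"
  by (rule poly_mapping_eqI) simp

lemma smul_diff_left: "smul (a - b) v = smul a v - smul b v"
  by (rule poly_mapping_eqI) (simp add: lookup_minus algebra_simps)

lemma smul_single: "smul c (bv m b) = Poly_Mapping.single (m, b) c"
  by (rule poly_mapping_eqI) (simp add: bv_def lookup_single when_def)

lemma lin_superset: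
  assumes "finite S" "Poly_Mapping.keys v \<subseteq> S"
  shows "lin g v = (\<Sum>x\<in>S. smul (Poly_Mapping.lookup v x) (g x))"
  unfolding lin_def
  by (rule sum.mono_neutral_left) (use assms in \<open>auto simp: in_keys_iff\<close>)

lemma lin_diff: "lin g (v - w) = lin g v - lin g w"
proof -
  let ?S = "Poly_Mapping.keys v \<union> Poly_Mapping.keys w"
  have "lin g (v - w) = (\<Sum>x\<in>?S. smul (Poly_Mapping.lookup (v - w) x) (g x))"
    by (rule lin_superset) (simp_all add: keys_diff)
  also have "\<dots> = (\<Sum>x\<in>?S. smul (Poly_Mapping.lookup v x) (g x))
                 - (\<Sum>x\<in>?S. smul (Poly_Mapping.lookup w x) (g x))"
    by (simp add: lookup_minus smul_diff_left sum_subtractf)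
  also have "\<dots> = lin g v - lin g w"
    using lin_superset[of ?S v g] lin_superset[of ?S w g] by simp
  finally show ?thesis .
qed

lemma lin_single: "lin g (Poly_Mapping.single x c) = smul c (g x)"
  by (simp add: lin_def)

lemma lin_bv: "lin g (bv m b) = g (m, b)"
  by (simp add: lin_def bv_def)

lemma lin_bv_diff: "lin g (bv m b - bv m' b') = g (m, b) - g (m', b')"
  by (simp add: lin_diff lin_bv)

lemma deg_zero [simp]: "deg 0 = 0"
  by (simp add: deg_def)

text \<open>The sum is \<langle>\<alpha>,\<beta>\<rangle>: simple roots and fundamental weights are dual bases.\<close>
lemma eop_b_vacuum:
  assumes "(\<Sum>i\<in>UNIV. c i * b i) + n + 1 \<ge> 0"
  shows "eop_b c n (0, b) = (if (\<Sum>i\<in>UNIV. c i * b i) + n + 1 = 0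
           then smul (eps (qwt c) b) (bv 0 (\<lambda>i. qwt c i + b i)) else 0)"
  using assms by (auto simp: eop_b_def Let_def expp_def expm_def)

lemma hmode_zero_single:
  "hmode h 0 (Poly_Mapping.single (m, b) c) = smul (c * ip h (of_wt b)) (bv m b)"
  by (rule poly_mapping_eqI) (simp add: hmode_def lin_single hmode_b_def)

lemma hmode_zero_smul_bv: "hmode h 0 (smul c (bv m b)) = smul (c * ip h (of_wt b)) (bv m b)"
  by (simp add: smul_single hmode_zero_single)

lemma qmode_b_vacuum_one:
  "qmode_b h1 h2 1 (0, b) = smul (ip h1 (of_wt b) * ip h2 (of_wt b)) (bv 0 b)"
  by (simp add: qmode_b_def hmode_zero_single hmode_zero_smul_bv mult.commute)

lemma qmode_b_vacuum_pos:
  assumes "n \<ge> 2"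
  shows "qmode_b h1 h2 n (0, b) = 0"
  using assms by (simp add: qmode_b_def)

definition mu_wt :: wt where
  "mu_wt = (\<lambda>i. case i of I1 \<Rightarrow> 0 | I2 \<Rightarrow> 0 | I3 \<Rightarrow> 1 | I4 \<Rightarrow> 0 | I5 \<Rightarrow> -1 | I6 \<Rightarrow> 1)"

definition taumu_wt :: wt where
  "taumu_wt = (\<lambda>i. case i of I1 \<Rightarrow> 1 | I2 \<Rightarrow> 0 | I3 \<Rightarrow> -1 | I4 \<Rightarrow> 0 | I5 \<Rightarrow> 1 | I6 \<Rightarrow> 0)"

definition hwv :: vec where
  "hwv = bv 0 mu_wt - bv 0 taumu_wt"

lemma qwt_mu: "qwt mu = mu_wt"
  by (rule ext, case_tac x) (simp_all add: qwt_def mu_wt_def mu_def UNIV_idx cartan_def)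

lemma qwt_taumu: "qwt taumu = taumu_wt"
  by (rule ext, case_tac x) (simp_all add: qwt_def taumu_wt_def taumu_def UNIV_idx cartan_def)

lemma mu_wt_neq_taumu_wt: "mu_wt \<noteq> taumu_wt"
proof
  assume "mu_wt = taumu_wt"
  then have "mu_wt I1 = taumu_wt I1" by simp
  then show False by (simp add: mu_wt_def taumu_wt_def)
qed

lemma keys_hwv: "Poly_Mapping.keys hwv \<subseteq> {(0, mu_wt), (0, taumu_wt)}"
  using keys_diff[of "bv 0 mu_wt" "bv 0 taumu_wt"] by (auto simp: hwv_def bv_def)

lemma hwv_nonzero: "hwv \<noteq> 0"
proof
  assume "hwv = 0"
  then have "Poly_Mapping.lookup hwv (0, mu_wt) = 0" by simp
  then show False
    using mu_wt_neq_taumu_wt by (simp add: hwv_def lookup_minus bv_def lookup_single when_def)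
qed

lemma in_VQ_hwv: "in_VQ hwv"
  using keys_hwv unfolding in_VQ_def by (auto simp: qwt_mu[symmetric] qwt_taumu[symmetric])

lemma proj_keys_hwv: "\<forall>x\<in>Poly_Mapping.keys hwv. proj (of_wt (snd x)) = omega4"
proof -
  have "proj (of_wt mu_wt) = omega4" "proj (of_wt taumu_wt) = omega4"
    by (rule ext, case_tac x; simp add: proj_def of_wt_def mu_wt_def taumu_wt_def omega4_def)+
  then show ?thesis using keys_hwv by auto
qed

lemmas eop_hwv_simps = hwv_def eop_def lin_bv_diff eop_b_vacuum UNIV_idx mu_wt_def taumu_wt_def

lemma eop_neg_theta_hwv: "eop (\<lambda>i. - theta i) 1 hwv = 0"
  by (simp add: eop_hwv_simps theta_def)

lemma eop_sroot_I2_hwv: "eop (sroot I2) 0 hwv = 0"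
  by (simp add: eop_hwv_simps sroot_def)

lemma eop_sroot_I4_hwv: "eop (sroot I4) 0 hwv = 0"
  by (simp add: eop_hwv_simps sroot_def)

lemma eop_sroot_I1_I6_hwv: "eop (sroot I1) 0 hwv + eop (sroot I6) 0 hwv = 0"
  by (simp add: eop_hwv_simps sroot_def)

lemma eop_sroot_I3_I5_hwv: "eop (sroot I3) 0 hwv + eop (sroot I5) 0 hwv = 0"
proof -
  have "eop (sroot I3) 0 hwv
          = - smul (eps (qwt (sroot I3)) taumu_wt) (bv 0 (\<lambda>i. qwt (sroot I3) i + taumu_wt i))"
    by (simp add: eop_hwv_simps sroot_def)
  moreover have "eop (sroot I5) 0 hwv
          = smul (eps (qwt (sroot I5)) mu_wt) (bv 0 (\<lambda>i. qwt (sroot I5) i + mu_wt i))"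
    by (simp add: eop_hwv_simps sroot_def)
  moreover have "(\<lambda>i. qwt (sroot I3) i + taumu_wt i) = (\<lambda>i. qwt (sroot I5) i + mu_wt i)"
    by (rule ext, case_tac i)
      (simp_all add: qwt_def UNIV_idx cartan_def sroot_def mu_wt_def taumu_wt_def)
  moreover have "eps (qwt (sroot I3)) taumu_wt = 1" "eps (qwt (sroot I5)) mu_wt = 1"
    by (simp_all add: eps_def UNIV_idx epsmat_def qwt_def cartan_def sroot_def
        mu_wt_def taumu_wt_def)
  ultimately show ?thesis by simp
qed

lemma Lop_1_hwv: "Lop 1 hwv = 0"
  by (simp add: Lop_def epm_def qmode_def qmode_b_vacuum_pos eop_hwv_simps
      gam1_def gam2_def gam3_def)

lemma Lop_2_hwv: "Lop 2 hwv = 0"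
  by (simp add: Lop_def epm_def qmode_def qmode_b_vacuum_pos eop_hwv_simps
      gam1_def gam2_def gam3_def)

lemma epm_gam2_hwv: "epm gam2 1 hwv = - hwv"
proof -
  have "eop gam2 1 hwv
          = - smul (eps (qwt gam2) taumu_wt) (bv 0 (\<lambda>i. qwt gam2 i + taumu_wt i))"
    by (simp add: eop_hwv_simps gam2_def)
  moreover have "eop (\<lambda>i. - gam2 i) 1 hwv
          = smul (eps (qwt (\<lambda>i. - gam2 i)) mu_wt) (bv 0 (\<lambda>i. qwt (\<lambda>i. - gam2 i) i + mu_wt i))"
    by (simp add: eop_hwv_simps gam2_def)
  moreover have "(\<lambda>i. qwt gam2 i + taumu_wt i) = mu_wt"
                "(\<lambda>i. qwt (\<lambda>i. - gam2 i) i + mu_wt i) = taumu_wt"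
    by (rule ext, case_tac i;
        simp add: qwt_def UNIV_idx cartan_def gam2_def mu_wt_def taumu_wt_def)+
  moreover have "eps (qwt gam2) taumu_wt = 1" "eps (qwt (\<lambda>i. - gam2 i)) mu_wt = 1"
    by (simp_all add: eps_def UNIV_idx epsmat_def qwt_def cartan_def gam2_def
        mu_wt_def taumu_wt_def)
  ultimately show ?thesis by (simp add: epm_def hwv_def)
qed

lemma Lop_0_hwv: "Lop 0 hwv = smul (2/5) hwv"
proof -
  have epm_gam13: "epm gam1 1 hwv = 0" "epm gam3 1 hwv = 0"
    by (simp_all add: epm_def eop_hwv_simps gam1_def gam2_def gam3_def)
  have qmode_hwv: "qmode g h 1 hwv
      = smul (ip g (of_wt mu_wt) * ip h (of_wt mu_wt)) (bv 0 mu_wt)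
      - smul (ip g (of_wt taumu_wt) * ip h (of_wt taumu_wt)) (bv 0 taumu_wt)" for g h
    by (simp add: hwv_def qmode_def lin_bv_diff qmode_b_vacuum_one)
  have pairings: "ip g1 (of_wt mu_wt) = 0" "ip g2 (of_wt mu_wt) = 1" "ip g3 (of_wt mu_wt) = -1"
    "ip g1 (of_wt taumu_wt) = 0" "ip g2 (of_wt taumu_wt) = -1" "ip g3 (of_wt taumu_wt) = 1"
    by (simp_all add: ip_def UNIV_idx g1_def g2_def g3_def of_wt_def ginv_def
        mu_wt_def taumu_wt_def of_rat_divide)
  have "Lop 0 hwv = smul (1/10) (qmode g1 g1 1 hwv + qmode g2 g2 1 hwv + qmode g3 g3 1 hwv)
                  + smul (1/5) (- epm gam1 1 hwv - epm gam2 1 hwv + epm gam3 1 hwv)"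
    by (simp add: Lop_def)
  then show ?thesis
    unfolding epm_gam13 epm_gam2_hwv qmode_hwv pairings
    by (intro poly_mapping_eqI) (simp add: hwv_def lookup_add lookup_minus field_simps)
qed

theorem lemma6p2:
  shows "in_VQ (bv 0 (qwt mu) - bv 0 (qwt taumu))
       \<and> hw_vec (2/5) omega4 (bv 0 (qwt mu) - bv 0 (qwt taumu))"
  unfolding qwt_mu qwt_taumu hwv_def[symmetric] hw_vec_def
  using in_VQ_hwv hwv_nonzero proj_keys_hwv eop_neg_theta_hwv eop_sroot_I2_hwv
    eop_sroot_I4_hwv eop_sroot_I3_I5_hwv eop_sroot_I1_I6_hwv Lop_0_hwv Lop_1_hwv Lop_2_hwv
  by blast

end
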